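(* Suppose $U\subseteq\mathbb{H}^d$ is $r$-connected and has subexponential growth. Then $U$ is a quasi-convex quasi-tree. Specifically, there is some $s=s(r)$ such that for every sequence $x=x_0,x_1,\dots,x_m=y$ in $U$ with $d(x_i,x_{i+1})\leq r$ for all $0\leq i<m$, and every point $p$ on the geodesic $[x,y]$, some $x_i$ is within distance $s$ of $p$.
   Context: $U$ is $r$-connected if any two points of $U$ are joined by a sequence in $U$ with consecutive distances $\leq r$. $U$ has subexponential growth if $\lim_{t\to\infty}\frac1t\log\sup_{u\in U}|U\cap B(u,t)|=0$ (for $U$ uniformly discrete), with distances in $\mathbb{H}^d$. *)

theory Defs
  imports "HOL-Analysis.Analysis"
begin

text \<open>Hyperbolic space H^d in the Poincare ball model: the open unit ball of a
Euclidean space 'a with d = DIM('a), with the hyperbolic distance.\<close>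

definition hyp_space :: "'a::euclidean_space set" where
  "hyp_space = ball 0 1"

definition hdist :: "'a::euclidean_space \<Rightarrow> 'a \<Rightarrow> real" where
  "hdist x y = arcosh (1 + 2 * (norm (x - y))\<^sup>2 / ((1 - (norm x)\<^sup>2) * (1 - (norm y)\<^sup>2)))"

definition hball :: "'a::euclidean_space \<Rightarrow> real \<Rightarrow> 'a set" where
  "hball u t = {v \<in> hyp_space. hdist u v \<le> t}"

text \<open>The geodesic segment [x,y]: union of images of all geodesics from x to y,
i.e. isometric embeddings of [0, d(x,y)] (unique in H^d).\<close>
definition geodesic_seg :: "'a::euclidean_space \<Rightarrow> 'a \<Rightarrow> 'a set" where
  "geodesic_seg x y = \<Union>{\<gamma> ` {0..hdist x y} | \<gamma>.
      \<gamma> 0 = x \<and> \<gamma> (hdist x y) = y \<and>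
      (\<forall>s\<in>{0..hdist x y}. \<gamma> s \<in> hyp_space) \<and>
      (\<forall>s\<in>{0..hdist x y}. \<forall>t\<in>{0..hdist x y}. hdist (\<gamma> s) (\<gamma> t) = \<bar>s - t\<bar>)}"

definition r_connected :: "'a::euclidean_space set \<Rightarrow> real \<Rightarrow> bool" where
  "r_connected U r \<longleftrightarrow> (\<forall>x\<in>U. \<forall>y\<in>U. \<exists>(m::nat) (xs::nat \<Rightarrow> 'a).
      xs 0 = x \<and> xs m = y \<and> (\<forall>i\<le>m. xs i \<in> U) \<and> (\<forall>i<m. hdist (xs i) (xs (Suc i)) \<le> r))"

definition uniformly_discrete :: "'a::euclidean_space set \<Rightarrow> bool" where
  "uniformly_discrete U \<longleftrightarrow> (\<exists>\<delta>>0. \<forall>u\<in>U. \<forall>v\<in>U. u \<noteq> v \<longrightarrow> \<delta> \<le> hdist u v)"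

definition subexp_growth :: "'a::euclidean_space set \<Rightarrow> bool" where
  "subexp_growth U \<longleftrightarrow> uniformly_discrete U \<and>
     ((\<lambda>t. ln (SUP u\<in>U. real (card (U \<inter> hball u t))) / t) \<longlongrightarrow> 0) at_top"

end

theory Submission
  imports Defs
begin

text \<open>
  Lift the ball to the hyperboloid and, for a point p, project centrally onto the tangent
  hyperplane at p (the Klein model centred at p), calling the result K. This gives the identity
    2 cosh d(x,y) / (cosh d(p,x) cosh d(p,y)) = |K x - K y|^2 + 1/cosh^2 d(p,x) + 1/cosh^2 d(p,y),
  so the square root of the left-hand side is, up to a factor 3, subadditive along chains.
  If p lies on [x,y] the left-hand side is at least 2, whereas for a step of length at most r
  it is O(exp (-d(p,x))). Hence a chain from x to y, with repetitions removed, has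
  exponential weight sum exp (-d(p,x_i)/2) bounded below. Subexponential growth (made effective
  by a packing bound for uniformly discrete sets in hyperbolic balls) bounds the weight of the
  chain points at distance at least k from p by a constant times exp (-k/4), so some x_i is
  within a constant distance s of p.
\<close>

section \<open>The hyperboloid model and Klein charts\<close>

lemma norm_less_one_if_hyp_space: "x \<in> hyp_space \<Longrightarrow> norm x < 1"
  by (simp add: hyp_space_def)

lemma one_minus_norm_square_pos: "x \<in> hyp_space \<Longrightarrow> 0 < 1 - (norm x)\<^sup>2"
  using norm_less_one_if_hyp_space[of x] by (simp add: abs_square_less_1)

lemma cosh_hdist:
  assumes "x \<in> hyp_space" "y \<in> hyp_space"
  shows "cosh (hdist x y) = 1 + 2 * (norm (x - y))\<^sup>2 / ((1 - (norm x)\<^sup>2) * (1 - (norm y)\<^sup>2))"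
  using one_minus_norm_square_pos[OF assms(1)] one_minus_norm_square_pos[OF assms(2)]
  unfolding hdist_def by (simp add: zero_le_divide_iff)

lemma hdist_nonneg: "x \<in> hyp_space \<Longrightarrow> y \<in> hyp_space \<Longrightarrow> 0 \<le> hdist x y"
  using one_minus_norm_square_pos[of x] one_minus_norm_square_pos[of y]
  unfolding hdist_def by (simp add: zero_le_divide_iff)

lemma hdist_commute: "hdist x y = hdist y x"
  unfolding hdist_def by (simp add: norm_minus_commute mult.commute)

lemma hdist_self [simp]: "hdist x x = 0"
  unfolding hdist_def by simp

lemma hdist_le_iff_cosh_le:
  assumes "x \<in> hyp_space" "y \<in> hyp_space" "0 \<le> t"
  shows "hdist x y \<le> t \<longleftrightarrow> cosh (hdist x y) \<le> cosh t"
  using assms hdist_nonneg[OF assms(1,2)] by (simp add: cosh_real_nonneg_le_iff)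

definition lorentz :: "real \<times> 'a::real_inner \<Rightarrow> real \<times> 'a \<Rightarrow> real" where
  "lorentz X Y = fst X * fst Y - snd X \<bullet> snd Y"

lemma lorentz_commute: "lorentz X Y = lorentz Y X"
  unfolding lorentz_def by (simp add: inner_commute)

lemma lorentz_diff_left: "lorentz (X - Y) Z = lorentz X Z - lorentz Y Z"
  and lorentz_diff_right: "lorentz Z (X - Y) = lorentz Z X - lorentz Z Y"
  and lorentz_scaleR_left: "lorentz (c *\<^sub>R X) Y = c * lorentz X Y"
  and lorentz_scaleR_right: "lorentz Y (c *\<^sub>R X) = c * lorentz Y X"
  unfolding lorentz_def by (simp_all add: algebra_simps)

lemmas lorentz_bilinear =
  lorentz_diff_left lorentz_diff_right lorentz_scaleR_left lorentz_scaleR_right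

text \<open>The standard isometry of the Poincare ball onto the upper sheet of the hyperboloid
  lorentz X X = 1.\<close>
definition hyperboloid_lift :: "'a::euclidean_space \<Rightarrow> real \<times> 'a" where
  "hyperboloid_lift x =
     ((1 + (norm x)\<^sup>2) / (1 - (norm x)\<^sup>2), (2 / (1 - (norm x)\<^sup>2)) *\<^sub>R x)"

lemma fst_hyperboloid_lift_pos: "x \<in> hyp_space \<Longrightarrow> 0 < fst (hyperboloid_lift x)"
  using one_minus_norm_square_pos[of x] unfolding hyperboloid_lift_def
  by (simp add: add_pos_nonneg)

lemma lorentz_hyperboloid_lift:
  assumes "x \<in> hyp_space" "y \<in> hyp_space"
  shows "lorentz (hyperboloid_lift x) (hyperboloid_lift y) = cosh (hdist x y)"
proof -
  define a b where "a = 1 - (norm x)\<^sup>2" and "b = 1 - (norm y)\<^sup>2"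
  have ab: "0 < a" "0 < b"
    using one_minus_norm_square_pos assms unfolding a_def b_def by auto
  have "(norm (x - y))\<^sup>2 = (norm x)\<^sup>2 + (norm y)\<^sup>2 - 2 * (x \<bullet> y)"
    by (simp add: power2_norm_eq_inner inner_diff_left inner_diff_right inner_commute)
  then have numerator:
      "(1 + (norm x)\<^sup>2) * (1 + (norm y)\<^sup>2) - 4 * (x \<bullet> y) = a * b + 2 * (norm (x - y))\<^sup>2"
    unfolding a_def b_def by (simp add: algebra_simps)
  have "lorentz (hyperboloid_lift x) (hyperboloid_lift y)
      = ((1 + (norm x)\<^sup>2) * (1 + (norm y)\<^sup>2) - 4 * (x \<bullet> y)) / (a * b)"
    using ab unfolding lorentz_def hyperboloid_lift_def a_def[symmetric] b_def[symmetric]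
    by (simp add: field_simps)
  also have "\<dots> = 1 + 2 * (norm (x - y))\<^sup>2 / (a * b)"
    unfolding numerator using ab by (simp add: add_divide_distrib)
  finally show ?thesis
    unfolding cosh_hdist[OF assms] a_def b_def .
qed

lemma lorentz_hyperboloid_lift_self:
  "x \<in> hyp_space \<Longrightarrow> lorentz (hyperboloid_lift x) (hyperboloid_lift x) = 1"
  using lorentz_hyperboloid_lift[of x x] by simp

text \<open>For P on the upper sheet of the hyperboloid, this map restricts to a linear isometry from
  the Lorentz-orthogonal complement of P onto 'a: it is the spatial part of the boost taking P
  to (1, 0).\<close>
definition tangent_chart :: "real \<times> 'a::real_inner \<Rightarrow> real \<times> 'a \<Rightarrow> 'a" where
  "tangent_chart P W = snd W - (fst W / (fst P + 1)) *\<^sub>R snd P"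

lemma tangent_chart_diff: "tangent_chart P (V - W) = tangent_chart P V - tangent_chart P W"
  unfolding tangent_chart_def by (simp add: algebra_simps diff_divide_distrib)

lemma norm_tangent_chart:
  assumes "lorentz P P = 1" "0 < fst P" "lorentz P W = 0"
  shows "(norm (tangent_chart P W))\<^sup>2 = - lorentz W W"
proof -
  obtain P0 p W0 w where PW: "P = (P0, p)" "W = (W0, w)" by fastforce
  have p: "p \<bullet> p = P0\<^sup>2 - 1" and pw: "p \<bullet> w = P0 * W0" and "P0 + 1 > 0"
    using assms unfolding PW lorentz_def by (auto simp: power2_eq_square)
  define c where "c = W0 / (P0 + 1)"
  have cW: "c * (P0 + 1) = W0"
    unfolding c_def using \<open>P0 + 1 > 0\<close> by simp
  have "c * c * (p \<bullet> p) = c * (c * (P0 + 1)) * (P0 - 1)"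
    unfolding p by (simp add: power2_eq_square algebra_simps)
  then have "c * c * (p \<bullet> p) = c * W0 * (P0 - 1)"
    unfolding cW .
  then have "(norm (w - c *\<^sub>R p))\<^sup>2 = w \<bullet> w - c * W0 * (P0 + 1)"
    unfolding power2_norm_eq_inner
    by (simp add: inner_commute pw algebra_simps)
  also have "c * W0 * (P0 + 1) = W0\<^sup>2"
    using cW by (simp add: power2_eq_square algebra_simps)
  finally have "(norm (w - (W0 / (P0 + 1)) *\<^sub>R p))\<^sup>2 = w \<bullet> w - W0\<^sup>2"
    unfolding c_def .
  then show ?thesis
    unfolding tangent_chart_def lorentz_def PW by (simp add: power2_eq_square)
qed

lemma lorentz_chart_identity:
  fixes P X Y :: "real \<times> 'a::real_inner"
  assumes P: "lorentz P P = 1" "0 < fst P" and X: "lorentz X X = 1" and Y: "lorentz Y Y = 1"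
    and bX: "lorentz P X \<noteq> 0" and bY: "lorentz P Y \<noteq> 0"
  defines "ZX \<equiv> (1 / lorentz P X) *\<^sub>R X - P" and "ZY \<equiv> (1 / lorentz P Y) *\<^sub>R Y - P"
  shows "2 * lorentz X Y / (lorentz P X * lorentz P Y) =
    (norm (tangent_chart P ZX - tangent_chart P ZY))\<^sup>2 + 1 / (lorentz P X)\<^sup>2 + 1 / (lorentz P Y)\<^sup>2"
proof -
  have orth: "lorentz P ZX = 0" "lorentz P ZY = 0"
    using P bX bY unfolding ZX_def ZY_def by (simp_all add: lorentz_bilinear)
  have "lorentz ZX ZX = 1 / (lorentz P X)\<^sup>2 - 1" "lorentz ZY ZY = 1 / (lorentz P Y)\<^sup>2 - 1"
    using P X Y bX bY unfolding ZX_def ZY_def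
    by (simp_all add: lorentz_bilinear lorentz_commute[of X P] lorentz_commute[of Y P]
        power2_eq_square diff_divide_distrib)
  moreover have "lorentz ZX ZY = lorentz X Y / (lorentz P X * lorentz P Y) - 1"
    using P bX bY unfolding ZX_def ZY_def
    by (simp add: lorentz_bilinear lorentz_commute[of X P] lorentz_commute[of Y X]
        diff_divide_distrib)
  moreover have "(norm (tangent_chart P ZX - tangent_chart P ZY))\<^sup>2 = - lorentz (ZX - ZY) (ZX - ZY)"
    unfolding tangent_chart_diff[symmetric]
    using P orth by (intro norm_tangent_chart) (simp_all add: lorentz_diff_right)
  ultimately show ?thesis
    by (simp add: lorentz_bilinear lorentz_commute[of ZY ZX])
qed

lemma tanh_square_add_inverse_cosh_square: "(tanh x)\<^sup>2 + 1 / (cosh x)\<^sup>2 = (1::real)"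
proof -
  have "(cosh x)\<^sup>2 \<noteq> 0" by simp
  then show ?thesis
    unfolding tanh_def using hyperbolic_pythagoras[of x]
    by (simp add: power_divide add_divide_distrib[symmetric])
qed

text \<open>Central projection of the hyperboloid from the origin onto its tangent hyperplane at the lift
  of p (the Beltrami-Klein model centred at p), read in the tangent chart.\<close>
definition klein_chart :: "'a::euclidean_space \<Rightarrow> 'a \<Rightarrow> 'a" where
  "klein_chart p x = tangent_chart (hyperboloid_lift p)
     ((1 / cosh (hdist p x)) *\<^sub>R hyperboloid_lift x - hyperboloid_lift p)"

definition cosh_ratio :: "'a::euclidean_space \<Rightarrow> 'a \<Rightarrow> 'a \<Rightarrow> real" where
  "cosh_ratio p x y = 2 * cosh (hdist x y) / (cosh (hdist p x) * cosh (hdist p y))"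

lemma klein_chart_identity:
  assumes "p \<in> hyp_space" "x \<in> hyp_space" "y \<in> hyp_space"
  shows "cosh_ratio p x y = (norm (klein_chart p x - klein_chart p y))\<^sup>2
    + 1 / (cosh (hdist p x))\<^sup>2 + 1 / (cosh (hdist p y))\<^sup>2"
  using assms
    lorentz_chart_identity[of "hyperboloid_lift p" "hyperboloid_lift x" "hyperboloid_lift y"]
  by (simp add: cosh_ratio_def klein_chart_def lorentz_hyperboloid_lift
      lorentz_hyperboloid_lift_self fst_hyperboloid_lift_pos)

lemma klein_chart_self: "klein_chart p p = 0"
  by (simp add: klein_chart_def tangent_chart_def)

lemma norm_klein_chart:
  assumes "p \<in> hyp_space" "x \<in> hyp_space"
  shows "norm (klein_chart p x) = tanh (hdist p x)"
proof -
  have "2 = (norm (klein_chart p x))\<^sup>2 + 1 / (cosh (hdist p x))\<^sup>2 + 1"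
    using klein_chart_identity[OF assms(1,2,1)]
    by (simp add: cosh_ratio_def klein_chart_self hdist_commute)
  then have "(norm (klein_chart p x))\<^sup>2 = (tanh (hdist p x))\<^sup>2"
    using tanh_square_add_inverse_cosh_square[of "hdist p x"] by simp
  then show ?thesis
    using hdist_nonneg[OF assms] by simp
qed

lemma hdist_triangle:
  assumes "x \<in> hyp_space" "y \<in> hyp_space" "z \<in> hyp_space"
  shows "hdist x z \<le> hdist x y + hdist y z"
proof -
  define a b where "a = hdist y x" and "b = hdist y z"
  have "0 \<le> a" "0 \<le> b"
    unfolding a_def b_def using assms hdist_nonneg by auto
  have "2 * cosh (hdist x z) / (cosh a * cosh b)
      = (norm (klein_chart y x - klein_chart y z))\<^sup>2 + 1 / (cosh a)\<^sup>2 + 1 / (cosh b)\<^sup>2"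
    unfolding a_def b_def using klein_chart_identity[OF assms(2,1,3)] by (simp add: cosh_ratio_def)
  also have "\<dots> \<le> (tanh a + tanh b)\<^sup>2 + 1 / (cosh a)\<^sup>2 + 1 / (cosh b)\<^sup>2"
    using norm_triangle_ineq4[of "klein_chart y x" "klein_chart y z"]
    by (simp add: power_mono norm_klein_chart assms a_def b_def)
  also have "\<dots> = 2 + 2 * tanh a * tanh b"
    using tanh_square_add_inverse_cosh_square[of a] tanh_square_add_inverse_cosh_square[of b]
    by (simp add: power2_sum)
  also have "\<dots> = 2 * cosh (a + b) / (cosh a * cosh b)"
    by (simp add: cosh_add tanh_def field_simps)
  finally have "cosh (hdist x z) \<le> cosh (a + b)"
    by (simp add: divide_le_cancel)
  then have "hdist x z \<le> a + b"
    using hdist_le_iff_cosh_le[OF assms(1,3)] \<open>0 \<le> a\<close> \<open>0 \<le> b\<close> by simp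
  then show ?thesis
    by (simp add: a_def b_def hdist_commute)
qed

section \<open>Chains along a geodesic\<close>

lemma sqrt_chain_bound:
  fixes V :: "nat \<Rightarrow> 'a::real_normed_vector" and \<alpha> :: "nat \<Rightarrow> real"
  assumes \<alpha>: "\<And>i. 0 \<le> \<alpha> i" and "0 < m"
  defines "R i j \<equiv> (norm (V i - V j))\<^sup>2 + \<alpha> i + \<alpha> j"
  shows "sqrt (R 0 m) \<le> 3 * (\<Sum>i<m. sqrt (R i (Suc i)))"
proof -
  define S where "S = (\<Sum>i<m. sqrt (R i (Suc i)))"
  have step_le_S: "sqrt (R i (Suc i)) \<le> S" if "i < m" for i
    unfolding S_def using that \<alpha> by (intro member_le_sum) (auto simp: R_def)
  have "sqrt (R 0 m) \<le> sqrt ((norm (V 0 - V m))\<^sup>2 + \<alpha> 0) + sqrt (\<alpha> m)"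
    unfolding R_def using \<alpha> by (intro sqrt_add_le_add_sqrt) auto
  also have "sqrt ((norm (V 0 - V m))\<^sup>2 + \<alpha> 0) \<le> norm (V 0 - V m) + sqrt (\<alpha> 0)"
    using sqrt_add_le_add_sqrt[of "(norm (V 0 - V m))\<^sup>2" "\<alpha> 0"] \<alpha> by simp
  also have "norm (V 0 - V m) \<le> S"
  proof -
    have "norm (V 0 - V m) \<le> (\<Sum>i<m. norm (V i - V (Suc i)))"
      unfolding sum_lessThan_telescope'[symmetric] by (rule norm_sum)
    also have "\<dots> \<le> S"
      unfolding S_def R_def using \<alpha> by (intro sum_mono real_le_rsqrt) auto
    finally show ?thesis .
  qed
  also have "sqrt (\<alpha> 0) \<le> S"
  proof -
    have "sqrt (\<alpha> 0) \<le> sqrt (R 0 (Suc 0))"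
      unfolding R_def using \<alpha>[of 1] by (intro real_sqrt_le_mono) simp
    then show ?thesis
      using step_le_S[OF \<open>0 < m\<close>] by (rule order_trans)
  qed
  also have "sqrt (\<alpha> m) \<le> S"
  proof -
    have m: "Suc (m - 1) = m" "m - 1 < m"
      using \<open>0 < m\<close> by auto
    have "sqrt (\<alpha> m) \<le> sqrt (R (m - 1) m)"
      unfolding R_def using \<alpha>[of "m - 1"] by (intro real_sqrt_le_mono) simp
    then show ?thesis
      using step_le_S[OF m(2)] unfolding m(1) by (rule order_trans)
  qed
  finally show ?thesis
    unfolding S_def by simp
qed

lemma geodesic_seg_subset_hyp_space: "geodesic_seg x y \<subseteq> hyp_space"
  unfolding geodesic_seg_def by fastforce

lemma hdist_add_geodesic_seg:
  assumes "p \<in> geodesic_seg x y"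
  shows "hdist x p + hdist p y = hdist x y"
proof -
  obtain \<gamma> s where s: "s \<in> {0..hdist x y}" "p = \<gamma> s" and ends: "\<gamma> 0 = x" "\<gamma> (hdist x y) = y"
    and isometric: "\<forall>s\<in>{0..hdist x y}. \<forall>t\<in>{0..hdist x y}. hdist (\<gamma> s) (\<gamma> t) = \<bar>s - t\<bar>"
    using assms unfolding geodesic_seg_def by blast
  have "0 \<in> {0..hdist x y}" "hdist x y \<in> {0..hdist x y}"
    using s(1) by auto
  then have "hdist x p = \<bar>0 - s\<bar>" "hdist p y = \<bar>s - hdist x y\<bar>"
    using isometric s ends by metis+
  then show ?thesis
    using s(1) by simp
qed

lemma two_le_cosh_ratio_geodesic_seg:
  assumes "x \<in> hyp_space" "y \<in> hyp_space" "p \<in> geodesic_seg x y"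
  shows "2 \<le> cosh_ratio p x y"
proof -
  have "p \<in> hyp_space"
    using assms(3) geodesic_seg_subset_hyp_space by blast
  then have "0 \<le> sinh (hdist p x) * sinh (hdist p y)"
    using assms hdist_nonneg[of p x] hdist_nonneg[of p y] by simp
  moreover have "hdist x y = hdist p x + hdist p y"
    using hdist_add_geodesic_seg[OF assms(3)] by (simp add: hdist_commute)
  ultimately have "cosh (hdist p x) * cosh (hdist p y) \<le> cosh (hdist x y)"
    by (simp add: cosh_add)
  then show ?thesis
    unfolding cosh_ratio_def by (simp add: pos_le_divide_eq)
qed

lemma cosh_ratio_le_exp:
  assumes "p \<in> hyp_space" "x \<in> hyp_space" "y \<in> hyp_space" "hdist x y \<le> r"
  shows "cosh_ratio p x y \<le> (2 * sqrt (cosh r) * exp (- hdist p x / 2))\<^sup>2"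
proof -
  have "0 \<le> r"
    using hdist_nonneg[OF assms(2,3)] assms(4) by linarith
  then have "cosh (hdist x y) \<le> cosh r"
    using hdist_le_iff_cosh_le[OF assms(2,3)] assms(4) by blast
  moreover have "exp (hdist p x) / 2 \<le> cosh (hdist p x)"
    unfolding cosh_field_def by (simp add: divide_right_mono)
  moreover have "1 \<le> cosh (hdist p y)"
    by (rule cosh_real_ge_1)
  ultimately have "cosh_ratio p x y \<le> 2 * cosh r / (exp (hdist p x) / 2 * 1)"
    unfolding cosh_ratio_def by (intro frac_le mult_mono) auto
  also have "\<dots> = (2 * sqrt (cosh r) * exp (- hdist p x / 2))\<^sup>2"
    by (simp add: exp_minus power2_eq_square exp_add[symmetric] field_simps)
  finally show ?thesis .
qed

lemma sqrt_cosh_ratio_chain_bound: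
  assumes "p \<in> hyp_space" "\<forall>i\<le>m. ys i \<in> hyp_space" "0 < m"
  shows "sqrt (cosh_ratio p (ys 0) (ys m)) \<le> 3 * (\<Sum>i<m. sqrt (cosh_ratio p (ys i) (ys (Suc i))))"
proof -
  have "cosh_ratio p (ys i) (ys j) = (norm (klein_chart p (ys i) - klein_chart p (ys j)))\<^sup>2
      + 1 / (cosh (hdist p (ys i)))\<^sup>2 + 1 / (cosh (hdist p (ys j)))\<^sup>2"
    if "i \<le> m" "j \<le> m" for i j
    using klein_chart_identity assms(1,2) that by blast
  then show ?thesis
    using assms(3)
      sqrt_chain_bound[of "\<lambda>i. 1 / (cosh (hdist p (ys i)))\<^sup>2" m "\<lambda>i. klein_chart p (ys i)"]
    by simp
qed

lemma geodesic_chain_exp_sum: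
  assumes ys: "\<forall>i\<le>m. ys i \<in> hyp_space" and steps: "\<forall>i<m. hdist (ys i) (ys (Suc i)) \<le> r"
    and p: "p \<in> geodesic_seg (ys 0) (ys m)"
  shows "1 \<le> 6 * sqrt (cosh r) * (\<Sum>i\<le>m. exp (- hdist p (ys i) / 2))"
proof -
  have "p \<in> hyp_space"
    using p geodesic_seg_subset_hyp_space by blast
  have sqrt_cosh: "1 \<le> sqrt (cosh r)"
    using cosh_real_ge_1[of r] by simp
  show ?thesis
  proof (cases "m = 0")
    case True
    then have "hdist (ys 0) p + hdist p (ys 0) = 0"
      using hdist_add_geodesic_seg[OF p] by simp
    then have "hdist p (ys 0) = 0"
      using hdist_nonneg \<open>p \<in> hyp_space\<close> ys by (simp add: hdist_commute)
    then have "(\<Sum>i\<le>m. exp (- hdist p (ys i) / 2)) = 1"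
      using True by simp
    moreover have "1 \<le> 6 * sqrt (cosh r)"
      using sqrt_cosh by linarith
    ultimately show ?thesis
      by simp
  next
    case False
    have "1 \<le> sqrt (cosh_ratio p (ys 0) (ys m))"
      using two_le_cosh_ratio_geodesic_seg[OF _ _ p] ys by simp
    also have "\<dots> \<le> 3 * (\<Sum>i<m. sqrt (cosh_ratio p (ys i) (ys (Suc i))))"
      using sqrt_cosh_ratio_chain_bound \<open>p \<in> hyp_space\<close> ys False by blast
    also have "\<dots> \<le> 3 * (\<Sum>i<m. 2 * sqrt (cosh r) * exp (- hdist p (ys i) / 2))"
      using cosh_ratio_le_exp[OF \<open>p \<in> hyp_space\<close>] ys steps
      by (intro mult_left_mono sum_mono real_le_lsqrt) auto
    also have "\<dots> = 6 * sqrt (cosh r) * (\<Sum>i<m. exp (- hdist p (ys i) / 2))"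
      by (simp add: sum_distrib_left mult.assoc)
    also have "\<dots> \<le> 6 * sqrt (cosh r) * (\<Sum>i\<le>m. exp (- hdist p (ys i) / 2))"
      using sqrt_cosh by (intro mult_left_mono sum_mono2) auto
    finally show ?thesis .
  qed
qed

lemma chain_splice:
  assumes chain: "\<forall>k<m. R (xs k) (xs (Suc k))" and "i < j" "j \<le> m" "xs i = xs j"
  defines "ys \<equiv> \<lambda>k. if k \<le> i then xs k else xs (k + (j - i))"
  shows "ys 0 = xs 0" and "ys (m - (j - i)) = xs m" and "\<forall>k<m - (j - i). R (ys k) (ys (Suc k))"
    and "ys ` {..m - (j - i)} \<subseteq> xs ` {..m}"
proof -
  show "ys 0 = xs 0"
    unfolding ys_def by simp
  show "ys (m - (j - i)) = xs m"
  proof (cases "m = j")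
    case True
    then show ?thesis
      unfolding ys_def using assms(2,4) by simp
  next
    case False
    then show ?thesis
      unfolding ys_def using assms(2,3) by auto
  qed
  show "\<forall>k<m - (j - i). R (ys k) (ys (Suc k))"
  proof (intro allI impI)
    fix k assume "k < m - (j - i)"
    consider "k < i" | "k = i" | "i < k"
      by linarith
    then show "R (ys k) (ys (Suc k))"
    proof cases
      case 3
      then show ?thesis
        unfolding ys_def using chain \<open>k < m - (j - i)\<close> by auto
    qed (use chain \<open>k < m - (j - i)\<close> assms(2-4) in \<open>auto simp: ys_def\<close>)
  qed
  show "ys ` {..m - (j - i)} \<subseteq> xs ` {..m}"
    unfolding ys_def using assms(2,3) by (auto intro: imageI)
qed

lemma exists_injective_subchain:
  assumes "\<forall>k<m. R (xs k) (xs (Suc k))"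
  shows "\<exists>n ys. ys 0 = xs 0 \<and> ys n = xs m \<and> (\<forall>k<n. R (ys k) (ys (Suc k)))
    \<and> ys ` {..n} \<subseteq> xs ` {..m} \<and> inj_on ys {..n}"
  using assms
proof (induction m arbitrary: xs rule: less_induct)
  case (less m)
  show ?case
  proof (cases "inj_on xs {..m}")
    case True
    then show ?thesis
      using less.prems by blast
  next
    case False
    then obtain i j where "i < j" "j \<le> m" "xs i = xs j"
      unfolding inj_on_def by (metis atMost_iff linorder_neqE_nat)
    note splice = chain_splice[OF less.prems this]
    have "m - (j - i) < m"
      using \<open>i < j\<close> \<open>j \<le> m\<close> by auto
    from less.IH[OF this splice(3)] splice(1,2,4) show ?thesis
      by (metis (no_types, lifting) order_trans)
  qed
qed

section \<open>Packing and growth\<close>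

lemma card_mult_measure_ball_le:
  fixes S :: "'a::euclidean_space set"
  assumes "finite S" "S \<subseteq> cball c R" "0 \<le> R" "0 < \<epsilon>"
    and sep: "\<forall>y\<in>S. \<forall>z\<in>S. y \<noteq> z \<longrightarrow> \<epsilon> \<le> dist y z"
  shows "real (card S) * measure lborel (ball (0::'a) (\<epsilon> / 2))
    \<le> measure lborel (ball c (R + \<epsilon> / 2))"
proof -
  have finite_ball: "emeasure lborel (ball x s) \<noteq> \<infinity>" if "0 \<le> s" for x :: 'a and s
    using emeasure_ball[OF that, of x] by simp
  have "disjoint_family_on (\<lambda>y. ball y (\<epsilon> / 2)) S"
    unfolding disjoint_family_on_def
  proof (intro ballI impI)
    fix y z assume "y \<in> S" "z \<in> S" "y \<noteq> z"
    then have "\<epsilon> \<le> dist y z"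
      using sep by blast
    then show "ball y (\<epsilon> / 2) \<inter> ball z (\<epsilon> / 2) = {}"
      using dist_triangle_half_l[of y _ \<epsilon> z] by (auto simp: dist_commute)
  qed
  then have "real (card S) * measure lborel (ball (0::'a) (\<epsilon> / 2))
      = measure lborel (\<Union>y\<in>S. ball y (\<epsilon> / 2))"
    using assms(1,4) finite_ball[of "\<epsilon> / 2"]
    by (subst measure_finite_Union) (auto simp: content_ball)
  also have "\<dots> \<le> measure lborel (ball c (R + \<epsilon> / 2))"
  proof (rule measure_mono_fmeasurable)
    show "(\<Union>y\<in>S. ball y (\<epsilon> / 2)) \<subseteq> ball c (R + \<epsilon> / 2)"
    proof
      fix x assume "x \<in> (\<Union>y\<in>S. ball y (\<epsilon> / 2))"
      then obtain y where "y \<in> S" "dist y x < \<epsilon> / 2"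
        by auto
      then have "dist c y + dist y x < R + \<epsilon> / 2"
        using assms(2) by force
      then show "x \<in> ball c (R + \<epsilon> / 2)"
        using dist_triangle[of c x y] by simp
    qed
    show "(\<Union>y\<in>S. ball y (\<epsilon> / 2)) \<in> sets lborel"
      by (simp add: open_UN borel_open)
    show "ball c (R + \<epsilon> / 2) \<in> fmeasurable lborel"
      using finite_ball[of "R + \<epsilon> / 2" c] assms(3,4) by (simp add: fmeasurable_def less_top)
  qed
  finally show ?thesis .
qed

lemma card_separated_subset_cball_le:
  fixes S :: "'a::euclidean_space set"
  assumes "finite S" "S \<subseteq> cball c R" "0 \<le> R" "0 < \<epsilon>"
    and "\<forall>y\<in>S. \<forall>z\<in>S. y \<noteq> z \<longrightarrow> \<epsilon> \<le> dist y z"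
  shows "real (card S) \<le> ((2 * R + \<epsilon>) / \<epsilon>) ^ DIM('a)"
proof -
  have "0 < unit_ball_vol (real DIM('a))"
    by simp
  then have "real (card S) * (\<epsilon> / 2) ^ DIM('a) \<le> (R + \<epsilon> / 2) ^ DIM('a)"
    using card_mult_measure_ball_le[OF assms] assms(3,4)
    by (simp add: content_ball mult.left_commute[of "unit_ball_vol (real DIM('a))"])
  moreover have "0 < (\<epsilon> / 2) ^ DIM('a)"
    using assms(4) by simp
  ultimately have "real (card S) \<le> (R + \<epsilon> / 2) ^ DIM('a) / (\<epsilon> / 2) ^ DIM('a)"
    by (simp only: pos_le_divide_eq)
  also have "\<dots> = ((R + \<epsilon> / 2) / (\<epsilon> / 2)) ^ DIM('a)"
    by (rule power_divide[symmetric])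
  also have "(R + \<epsilon> / 2) / (\<epsilon> / 2) = (2 * R + \<epsilon>) / \<epsilon>"
    using assms(4) by (simp add: field_simps)
  finally show ?thesis .
qed

lemma separated_subset_cball_finite:
  fixes S :: "'a::euclidean_space set"
  assumes "S \<subseteq> cball c R" "0 \<le> R" "0 < \<epsilon>"
    and "\<forall>y\<in>S. \<forall>z\<in>S. y \<noteq> z \<longrightarrow> \<epsilon> \<le> dist y z"
  shows "finite S \<and> real (card S) \<le> ((2 * R + \<epsilon>) / \<epsilon>) ^ DIM('a)"
proof -
  define B where "B = ((2 * R + \<epsilon>) / \<epsilon>) ^ DIM('a)"
  have "real (card G) \<le> B" if "G \<subseteq> S" "finite G" for G
    unfolding B_def using assms that by (intro card_separated_subset_cball_le[of G c]) auto
  then have "card G \<le> nat \<lceil>B\<rceil>" if "G \<subseteq> S" "finite G" for G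
    using that real_nat_ceiling_ge[of B] by (meson of_nat_le_iff order_trans)
  then have "finite S"
    using finite_if_finite_subsets_card_bdd by blast
  then show ?thesis
    using assms by (simp add: card_separated_subset_cball_le)
qed

lemma abs_norm_square_diff_le:
  fixes u y :: "'a::real_normed_vector"
  assumes "norm u \<le> 1" "norm y \<le> 1"
  shows "\<bar>(norm u)\<^sup>2 - (norm y)\<^sup>2\<bar> \<le> 2 * norm (u - y)"
proof -
  have "(norm u)\<^sup>2 - (norm y)\<^sup>2 = (norm u - norm y) * (norm u + norm y)"
    by (simp add: power2_eq_square algebra_simps)
  then have "\<bar>(norm u)\<^sup>2 - (norm y)\<^sup>2\<bar> = \<bar>norm u - norm y\<bar> * (norm u + norm y)"
    by (simp add: abs_mult)
  also have "\<dots> \<le> norm (u - y) * 2"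
    using assms norm_triangle_ineq3[of u y] by (intro mult_mono) auto
  finally show ?thesis
    by simp
qed

lemma real_quadratic_bounds:
  fixes K w v e :: real
  assumes "0 \<le> K" "0 < w" "0 \<le> e" "e\<^sup>2 \<le> K * w * v" "\<bar>w - v\<bar> \<le> 2 * e"
  shows "e \<le> (2 * K + 1) * w" and "w / (16 * (K + 1)) \<le> v"
proof (rule ccontr)
  assume "\<not> e \<le> (2 * K + 1) * w"
  then have e: "(2 * K + 1) * w < e" by simp
  have "K * w \<le> (2 * K + 1) * w"
    using assms by (intro mult_right_mono) auto
  then have "K * w < e"
    using e by linarith
  have "0 < (2 * K + 1) * w"
    using assms by simp
  then have "0 < e"
    using e by linarith
  have "w * (K * w) < w * e"
    using \<open>K * w < e\<close> assms(2) by (rule mult_strict_left_mono)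
  moreover have "e * ((2 * K + 1) * w) < e * e"
    using e \<open>0 < e\<close> by (rule mult_strict_left_mono)
  ultimately have "K * w * (w + 2 * e) < e\<^sup>2"
    by (simp add: algebra_simps power2_eq_square)
  moreover have "K * w * v \<le> K * w * (w + 2 * e)"
    using assms by (intro mult_left_mono) auto
  ultimately show False
    using assms(4) by linarith
next
  show "w / (16 * (K + 1)) \<le> v"
  proof (rule ccontr)
    assume "\<not> ?thesis"
    then have v: "v < w / (16 * (K + 1))" by simp
    have "K * w * v \<le> K * w * (w / (16 * (K + 1)))"
      using v assms by (intro mult_left_mono) auto
    also have "\<dots> = (w / 4)\<^sup>2 * (K / (K + 1))"
      by (simp add: power2_eq_square field_simps)
    also have "\<dots> \<le> (w / 4)\<^sup>2"
      using assms by (intro mult_left_le) auto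
    finally have "e\<^sup>2 \<le> (w / 4)\<^sup>2"
      using assms(4) by linarith
    then have "e \<le> w / 4"
      by (rule power2_le_imp_le) (use assms in simp)
    moreover have "w / (16 * (K + 1)) \<le> w / 16"
      using assms by (intro divide_left_mono) auto
    ultimately show False
      using v assms(2,5) by linarith
  qed
qed

lemma hball_mono: "t \<le> t' \<Longrightarrow> hball u t \<subseteq> hball u t'"
  unfolding hball_def by auto

lemma hball_euclidean_bounds:
  assumes u: "u \<in> hyp_space" and y: "y \<in> hball u t"
  defines "w \<equiv> 1 - (norm u)\<^sup>2" and "K \<equiv> (cosh t - 1) / 2"
  shows "norm (u - y) \<le> (2 * K + 1) * w" and "w / (16 * (K + 1)) \<le> 1 - (norm y)\<^sup>2"
proof -
  have "y \<in> hyp_space" "hdist u y \<le> t"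
    using y unfolding hball_def by auto
  have "0 < w" "0 < 1 - (norm y)\<^sup>2"
    unfolding w_def using one_minus_norm_square_pos u \<open>y \<in> hyp_space\<close> by blast+
  have "0 \<le> t"
    using hdist_nonneg[OF u \<open>y \<in> hyp_space\<close>] \<open>hdist u y \<le> t\<close> by linarith
  then have "cosh (hdist u y) \<le> cosh t"
    using hdist_le_iff_cosh_le[OF u \<open>y \<in> hyp_space\<close>] \<open>hdist u y \<le> t\<close> by blast
  then have "2 * (norm (u - y))\<^sup>2 / (w * (1 - (norm y)\<^sup>2)) \<le> 2 * K"
    unfolding cosh_hdist[OF u \<open>y \<in> hyp_space\<close>] w_def K_def by simp
  then have e2: "(norm (u - y))\<^sup>2 \<le> K * w * (1 - (norm y)\<^sup>2)"
    using \<open>0 < w\<close> \<open>0 < 1 - (norm y)\<^sup>2\<close> by (simp add: divide_le_eq mult.commute mult.left_commute)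
  have wv: "\<bar>w - (1 - (norm y)\<^sup>2)\<bar> \<le> 2 * norm (u - y)"
    using abs_norm_square_diff_le[of y u] norm_less_one_if_hyp_space[OF u]
      norm_less_one_if_hyp_space[OF \<open>y \<in> hyp_space\<close>]
    unfolding w_def by (simp add: norm_minus_commute less_imp_le)
  have "0 \<le> K"
    unfolding K_def using cosh_real_ge_1[of t] by simp
  then show "norm (u - y) \<le> (2 * K + 1) * w" and "w / (16 * (K + 1)) \<le> 1 - (norm y)\<^sup>2"
    using real_quadratic_bounds[OF _ \<open>0 < w\<close> norm_ge_zero e2 wv] by auto
qed

lemma norm_diff_ge_if_hdist_ge:
  assumes y: "y \<in> hyp_space" and z: "z \<in> hyp_space" and "0 \<le> \<delta>" "\<delta> \<le> hdist y z"
    and "0 \<le> c" "c \<le> 1 - (norm y)\<^sup>2" "c \<le> 1 - (norm z)\<^sup>2"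
  shows "c * sqrt ((cosh \<delta> - 1) / 2) \<le> norm (y - z)"
proof -
  have vy: "0 < 1 - (norm y)\<^sup>2" and vz: "0 < 1 - (norm z)\<^sup>2"
    using y z by (blast intro: one_minus_norm_square_pos)+
  have "cosh \<delta> \<le> cosh (hdist y z)"
    using assms hdist_nonneg[OF y z] by (simp add: cosh_real_nonneg_le_iff)
  then have "cosh \<delta> - 1 \<le> 2 * (norm (y - z))\<^sup>2 / ((1 - (norm y)\<^sup>2) * (1 - (norm z)\<^sup>2))"
    unfolding cosh_hdist[OF y z] by linarith
  then have "(cosh \<delta> - 1) * ((1 - (norm y)\<^sup>2) * (1 - (norm z)\<^sup>2)) \<le> 2 * (norm (y - z))\<^sup>2"
    using vy vz by (simp add: pos_le_divide_eq)
  moreover have "(cosh \<delta> - 1) * (c * c) \<le> (cosh \<delta> - 1) * ((1 - (norm y)\<^sup>2) * (1 - (norm z)\<^sup>2))"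
    using assms cosh_real_ge_1[of \<delta>] by (intro mult_left_mono mult_mono) auto
  moreover have "(c * sqrt ((cosh \<delta> - 1) / 2))\<^sup>2 = (cosh \<delta> - 1) * (c * c) / 2"
    using cosh_real_ge_1[of \<delta>] by (simp add: power_mult_distrib power2_eq_square[of c])
  ultimately have "(c * sqrt ((cosh \<delta> - 1) / 2))\<^sup>2 \<le> (norm (y - z))\<^sup>2"
    by linarith
  then show ?thesis
    by (rule power2_le_imp_le) simp
qed

lemma hball_packing:
  assumes "0 < \<delta>"
  obtains K where "\<And>(u::'a::euclidean_space) S. u \<in> hyp_space \<Longrightarrow> S \<subseteq> hball u t \<Longrightarrow>
      \<forall>y\<in>S. \<forall>z\<in>S. y \<noteq> z \<longrightarrow> \<delta> \<le> hdist y z \<Longrightarrow> finite S \<and> real (card S) \<le> K"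
proof -
  define K where "K = (cosh t - 1) / 2"
  define \<epsilon> where "\<epsilon> = sqrt ((cosh \<delta> - 1) / 2) / (16 * (K + 1))"
  have "0 \<le> K"
    unfolding K_def using cosh_real_ge_1[of t] by simp
  have "1 < cosh \<delta>"
    using assms cosh_real_nonneg_less_iff[of 0 \<delta>] by simp
  then have "0 < \<epsilon>"
    unfolding \<epsilon>_def using \<open>0 \<le> K\<close> by simp
  \<comment> \<open>Both Euclidean bounds scale with w = 1 - norm u ^ 2, so the volume bound is uniform in u.\<close>
  show ?thesis
  proof (rule that)
    fix u :: 'a and S
    assume u: "u \<in> hyp_space" and S: "S \<subseteq> hball u t"
      and sep: "\<forall>y\<in>S. \<forall>z\<in>S. y \<noteq> z \<longrightarrow> \<delta> \<le> hdist y z"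
    define w where "w = 1 - (norm u)\<^sup>2"
    have "0 < w"
      unfolding w_def using one_minus_norm_square_pos[OF u] .
    have "S \<subseteq> cball u ((2 * K + 1) * w)"
      using hball_euclidean_bounds(1)[OF u] S unfolding K_def w_def by (auto simp: dist_norm)
    moreover have "\<epsilon> * w \<le> dist y z" if "y \<in> S" "z \<in> S" "y \<noteq> z" for y z
    proof -
      have "y \<in> hyp_space" "z \<in> hyp_space"
        using S that unfolding hball_def by auto
      moreover have "w / (16 * (K + 1)) \<le> 1 - (norm y)\<^sup>2" "w / (16 * (K + 1)) \<le> 1 - (norm z)\<^sup>2"
        using hball_euclidean_bounds(2)[OF u] S that unfolding K_def w_def by auto
      ultimately have "w / (16 * (K + 1)) * sqrt ((cosh \<delta> - 1) / 2) \<le> norm (y - z)"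
        using sep that assms \<open>0 < w\<close> \<open>0 \<le> K\<close> by (intro norm_diff_ge_if_hdist_ge) auto
      then show ?thesis
        unfolding \<epsilon>_def by (simp add: dist_norm field_simps)
    qed
    ultimately have "finite S \<and>
        real (card S) \<le> ((2 * ((2 * K + 1) * w) + \<epsilon> * w) / (\<epsilon> * w)) ^ DIM('a)"
      using \<open>0 < w\<close> \<open>0 < \<epsilon>\<close> \<open>0 \<le> K\<close> by (intro separated_subset_cball_finite) auto
    also have "(2 * ((2 * K + 1) * w) + \<epsilon> * w) / (\<epsilon> * w) = (2 * (2 * K + 1) + \<epsilon>) / \<epsilon>"
      using \<open>0 < w\<close> \<open>0 < \<epsilon>\<close> by (simp add: field_simps)
    finally show "finite S \<and> real (card S) \<le> ((2 * (2 * K + 1) + \<epsilon>) / \<epsilon>) ^ DIM('a)" .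
  qed
qed

lemma uniformly_discrete_hball_bounded:
  fixes U :: "'a::euclidean_space set"
  assumes "U \<subseteq> hyp_space" "uniformly_discrete U"
  obtains K where "\<And>u. u \<in> U \<Longrightarrow> finite (U \<inter> hball u t) \<and> real (card (U \<inter> hball u t)) \<le> K"
proof -
  obtain \<delta> where "0 < \<delta>" and sep: "\<forall>u\<in>U. \<forall>v\<in>U. u \<noteq> v \<longrightarrow> \<delta> \<le> hdist u v"
    using assms(2) unfolding uniformly_discrete_def by blast
  obtain K where K: "\<And>(u::'a) S. u \<in> hyp_space \<Longrightarrow> S \<subseteq> hball u t \<Longrightarrow>
      \<forall>y\<in>S. \<forall>z\<in>S. y \<noteq> z \<longrightarrow> \<delta> \<le> hdist y z \<Longrightarrow> finite S \<and> real (card S) \<le> K"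
    using hball_packing[OF \<open>0 < \<delta>\<close>] by blast
  have "finite (U \<inter> hball u t) \<and> real (card (U \<inter> hball u t)) \<le> K" if "u \<in> U" for u
    using K[of u "U \<inter> hball u t"] assms(1) sep that by auto
  then show ?thesis
    by (rule that)
qed

text \<open>Without this bound the supremum in subexp_growth could be a junk value, and card would be 0
  on an infinite ball.\<close>
lemma card_hball_le_SUP:
  assumes "U \<subseteq> hyp_space" "uniformly_discrete U" "u \<in> U"
  shows "finite (U \<inter> hball u t)
    \<and> real (card (U \<inter> hball u t)) \<le> (SUP v\<in>U. real (card (U \<inter> hball v t)))"
proof -
  obtain K where K: "\<And>u. u \<in> U \<Longrightarrow> finite (U \<inter> hball u t) \<and> real (card (U \<inter> hball u t)) \<le> K"
    using uniformly_discrete_hball_bounded assms(1,2) by blast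
  then have "bdd_above ((\<lambda>v. real (card (U \<inter> hball v t))) ` U)"
    by (intro bdd_aboveI2) auto
  then show ?thesis
    using K assms(3) by (auto intro: cSUP_upper)
qed

lemma subexp_growth_card_hball_le:
  assumes "U \<subseteq> hyp_space" "subexp_growth U" "0 < \<epsilon>"
  obtains C where "0 < C"
    and "\<And>u t. u \<in> U \<Longrightarrow> 0 \<le> t \<Longrightarrow>
      finite (U \<inter> hball u t) \<and> real (card (U \<inter> hball u t)) \<le> C * exp (\<epsilon> * t)"
proof -
  define N where "N t = (SUP u\<in>U. real (card (U \<inter> hball u t)))" for t
  have bounded: "finite (U \<inter> hball u t) \<and> real (card (U \<inter> hball u t)) \<le> N t" if "u \<in> U" for u t
    unfolding N_def using card_hball_le_SUP assms(1,2) that unfolding subexp_growth_def by blast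
  have "eventually (\<lambda>t. 0 < t \<and> ln (N t) / t < \<epsilon>) at_top"
    using assms(2,3) unfolding subexp_growth_def N_def
    by (intro eventually_conj eventually_gt_at_top order_tendstoD(2)) auto
  then obtain T where T: "\<And>t. T \<le> t \<Longrightarrow> 0 < t \<and> ln (N t) / t < \<epsilon>"
    unfolding eventually_at_top_linorder by blast
  then have "0 < T"
    by blast
  have large: "real (card (U \<inter> hball u t)) \<le> exp (\<epsilon> * t)" if "u \<in> U" "T \<le> t" for u t
  proof (cases "card (U \<inter> hball u t) = 0")
    case False
    then have "0 < real (card (U \<inter> hball u t))"
      by simp
    then have "0 < N t"
      using bounded[OF \<open>u \<in> U\<close>, of t] by linarith
    moreover have "ln (N t) < \<epsilon> * t"
      using T[OF \<open>T \<le> t\<close>] by (simp add: divide_less_eq mult.commute)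
    ultimately have "N t < exp (\<epsilon> * t)"
      by (metis exp_less_cancel_iff exp_ln)
    then show ?thesis
      using bounded[OF \<open>u \<in> U\<close>, of t] by linarith
  qed simp
  show ?thesis
  proof (rule that[of "exp (\<epsilon> * T)"])
    fix u and t :: real
    assume "u \<in> U" "0 \<le> t"
    have "U \<inter> hball u t \<subseteq> U \<inter> hball u (max t T)"
      using hball_mono[of t "max t T"] by auto
    then have "real (card (U \<inter> hball u t)) \<le> real (card (U \<inter> hball u (max t T)))"
      using bounded[OF \<open>u \<in> U\<close>] by (simp add: card_mono)
    also have "\<dots> \<le> exp (\<epsilon> * max t T)"
      using large[OF \<open>u \<in> U\<close>] by simp
    also have "\<dots> \<le> exp (\<epsilon> * T) * exp (\<epsilon> * t)"
      using assms(3) \<open>0 \<le> t\<close> \<open>0 < T\<close> by (simp add: exp_add[symmetric] distrib_left[symmetric])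
    finally show "finite (U \<inter> hball u t) \<and> real (card (U \<inter> hball u t)) \<le> exp (\<epsilon> * T) * exp (\<epsilon> * t)"
      using bounded[OF \<open>u \<in> U\<close>] by simp
  qed simp
qed

lemma sum_power_le_geometric:
  fixes q :: real
  assumes "0 \<le> q" "q < 1" "finite A" "\<And>k. k \<in> A \<Longrightarrow> a \<le> k"
  shows "(\<Sum>k\<in>A. q ^ k) \<le> q ^ a / (1 - q)"
proof -
  define M where "M = Max (insert a A)"
  have "A \<subseteq> {a..M}"
    unfolding M_def using assms(3,4) by auto
  then have "(\<Sum>k\<in>A. q ^ k) \<le> (\<Sum>k=a..M. q ^ k)"
    using assms(1) by (intro sum_mono2) auto
  also have "\<dots> = (q ^ a - q ^ Suc M) / (1 - q)"
    using assms(2) \<open>A \<subseteq> {a..M}\<close> unfolding M_def by (simp add: sum_gp assms(3))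
  also have "\<dots> \<le> q ^ a / (1 - q)"
    using assms(1,2) by (simp add: divide_right_mono)
  finally show ?thesis .
qed

lemma card_hdist_shell_le:
  assumes "U \<subseteq> hyp_space" "0 \<le> C"
    and growth: "\<And>u t. u \<in> U \<Longrightarrow> 0 \<le> t \<Longrightarrow>
      finite (U \<inter> hball u t) \<and> real (card (U \<inter> hball u t)) \<le> C * exp (\<epsilon> * t)"
    and "p \<in> hyp_space" "F \<subseteq> U"
  shows "real (card {u\<in>F. nat \<lfloor>hdist p u\<rfloor> = k}) \<le> C * exp (\<epsilon> * (2 * real k + 2))"
proof (cases "{u\<in>F. nat \<lfloor>hdist p u\<rfloor> = k} = {}")
  case False
  then obtain u0 where "u0 \<in> F" "nat \<lfloor>hdist p u0\<rfloor> = k"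
    by auto
  have "{u\<in>F. nat \<lfloor>hdist p u\<rfloor> = k} \<subseteq> U \<inter> hball u0 (2 * real k + 2)"
  proof
    fix u assume "u \<in> {u\<in>F. nat \<lfloor>hdist p u\<rfloor> = k}"
    then have "u \<in> F" "nat \<lfloor>hdist p u\<rfloor> = k"
      by auto
    have "u \<in> hyp_space" "u0 \<in> hyp_space"
      using \<open>u \<in> F\<close> \<open>u0 \<in> F\<close> assms(1,5) by auto
    then have "hdist u0 u \<le> hdist p u0 + hdist p u"
      using hdist_triangle[of u0 p u] assms(4) by (simp add: hdist_commute)
    also have "\<dots> \<le> 2 * k + 2"
      using \<open>nat \<lfloor>hdist p u0\<rfloor> = k\<close> \<open>nat \<lfloor>hdist p u\<rfloor> = k\<close> by linarith
    finally show "u \<in> U \<inter> hball u0 (2 * real k + 2)"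
      using \<open>u \<in> F\<close> \<open>u \<in> hyp_space\<close> assms(5) unfolding hball_def by auto
  qed
  moreover have "u0 \<in> U"
    using \<open>u0 \<in> F\<close> assms(5) by auto
  then have "finite (U \<inter> hball u0 (2 * real k + 2))"
    and "real (card (U \<inter> hball u0 (2 * real k + 2))) \<le> C * exp (\<epsilon> * (2 * real k + 2))"
    using growth[of u0 "2 * real k + 2"] by auto
  ultimately show ?thesis
    by (meson card_mono of_nat_le_iff order_trans)
next
  case True
  show ?thesis
    unfolding True using assms(2) by simp
qed

lemma sum_exp_far_points_le:
  assumes "U \<subseteq> hyp_space" "0 \<le> C" "\<epsilon> < 1/4"
    and growth: "\<And>u t. u \<in> U \<Longrightarrow> 0 \<le> t \<Longrightarrow>
      finite (U \<inter> hball u t) \<and> real (card (U \<inter> hball u t)) \<le> C * exp (\<epsilon> * t)"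
    and "p \<in> hyp_space" "F \<subseteq> U" "finite F" and far: "\<And>u. u \<in> F \<Longrightarrow> real k0 \<le> hdist p u"
  defines "q \<equiv> exp (2 * \<epsilon> - 1/2)"
  shows "(\<Sum>u\<in>F. exp (- hdist p u / 2)) \<le> C * exp (2 * \<epsilon>) * q ^ k0 / (1 - q)"
proof -
  define shell where "shell u = nat \<lfloor>hdist p u\<rfloor>" for u
  have "0 < q" "q < 1"
    unfolding q_def using assms(3) by auto
  have shell_le: "real (shell u) \<le> hdist p u" and shell_ge: "k0 \<le> shell u" if "u \<in> F" for u
    using far[OF that] hdist_nonneg[of p u] assms(1,5,6) that unfolding shell_def
    by (auto simp: le_nat_floor)
  have "(\<Sum>u\<in>F. exp (- hdist p u / 2)) \<le> (\<Sum>u\<in>F. exp (- real (shell u) / 2))"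
    using shell_le by (intro sum_mono) auto
  also have "\<dots> = (\<Sum>k\<in>shell ` F. real (card {u\<in>F. shell u = k}) * exp (- real k / 2))"
    by (subst sum.image_gen[OF \<open>finite F\<close>, of _ shell]) (auto intro: sum.cong)
  also have "\<dots> \<le> (\<Sum>k\<in>shell ` F. C * exp (2 * \<epsilon>) * q ^ k)"
  proof (rule sum_mono)
    fix k
    have "real (card {u\<in>F. shell u = k}) * exp (- real k / 2)
        \<le> C * exp (\<epsilon> * (2 * real k + 2)) * exp (- real k / 2)"
      using card_hdist_shell_le[OF assms(1,2) growth assms(5,6)] unfolding shell_def
      by (intro mult_right_mono) auto
    also have "\<dots> = C * exp (2 * \<epsilon>) * q ^ k"
      unfolding q_def exp_of_nat_mult[symmetric]
      by (simp add: mult.assoc exp_add[symmetric] algebra_simps)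
    finally show "real (card {u\<in>F. shell u = k}) * exp (- real k / 2) \<le> C * exp (2 * \<epsilon>) * q ^ k" .
  qed
  also have "\<dots> = C * exp (2 * \<epsilon>) * (\<Sum>k\<in>shell ` F. q ^ k)"
    by (simp add: sum_distrib_left)
  also have "\<dots> \<le> C * exp (2 * \<epsilon>) * (q ^ k0 / (1 - q))"
    using \<open>0 < q\<close> \<open>q < 1\<close> \<open>finite F\<close> shell_ge assms(2)
    by (intro mult_left_mono sum_power_le_geometric) auto
  finally show ?thesis
    by simp
qed

lemma chain_meets_ball_around_geodesic_point:
  assumes "U \<subseteq> hyp_space" "0 \<le> C" "\<epsilon> < 1/4"
    and growth: "\<And>u t. u \<in> U \<Longrightarrow> 0 \<le> t \<Longrightarrow>
      finite (U \<inter> hball u t) \<and> real (card (U \<inter> hball u t)) \<le> C * exp (\<epsilon> * t)"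
    and xs: "\<forall>i\<le>m. xs i \<in> U" and steps: "\<forall>i<m. hdist (xs i) (xs (Suc i)) \<le> r"
    and p: "p \<in> geodesic_seg (xs 0) (xs m)"
  defines "q \<equiv> exp (2 * \<epsilon> - 1/2)"
  assumes small: "6 * sqrt (cosh r) * (C * exp (2 * \<epsilon>) * q ^ k / (1 - q)) < 1"
  shows "\<exists>i\<le>m. hdist (xs i) p \<le> real k"
proof (rule ccontr)
  assume "\<not> (\<exists>i\<le>m. hdist (xs i) p \<le> real k)"
  then have far: "real k \<le> hdist p u" if "u \<in> xs ` {..m}" for u
    using that by (auto simp: hdist_commute)
  obtain n ys where ys: "ys 0 = xs 0" "ys n = xs m" "\<forall>i<n. hdist (ys i) (ys (Suc i)) \<le> r"
    "ys ` {..n} \<subseteq> xs ` {..m}" "inj_on ys {..n}"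
    using exists_injective_subchain[of m "\<lambda>a b. hdist a b \<le> r" xs] steps by blast
  have "ys ` {..n} \<subseteq> U"
    using ys(4) xs by auto
  have "1 \<le> 6 * sqrt (cosh r) * (\<Sum>i\<le>n. exp (- hdist p (ys i) / 2))"
    using geodesic_chain_exp_sum[of n ys r p] ys p \<open>ys ` {..n} \<subseteq> U\<close> assms(1) by auto
  also have "\<dots> = 6 * sqrt (cosh r) * (\<Sum>u\<in>ys ` {..n}. exp (- hdist p u / 2))"
    using ys(5) by (simp add: sum.reindex)
  also have "\<dots> \<le> 6 * sqrt (cosh r) * (C * exp (2 * \<epsilon>) * q ^ k / (1 - q))"
    unfolding q_def using \<open>ys ` {..n} \<subseteq> U\<close> ys(4) far assms(1-3) p
    by (intro mult_left_mono sum_exp_far_points_le[OF _ _ _ growth])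
      (auto intro: geodesic_seg_subset_hyp_space[THEN subsetD])
  finally show False
    using small by simp
qed

theorem lemma5p1:
  fixes U :: "'a::euclidean_space set" and r :: real
  assumes "U \<subseteq> hyp_space"
    and "r_connected U r"
    and "subexp_growth U"
  shows "\<exists>s::real. \<forall>(m::nat) (xs::nat \<Rightarrow> 'a) p.
           (\<forall>i\<le>m. xs i \<in> U) \<longrightarrow> (\<forall>i<m. hdist (xs i) (xs (Suc i)) \<le> r) \<longrightarrow>
           p \<in> geodesic_seg (xs 0) (xs m) \<longrightarrow> (\<exists>i\<le>m. hdist (xs i) p \<le> s)"
proof -
  obtain C where "0 < C" and growth: "\<And>u t. u \<in> U \<Longrightarrow> 0 \<le> t \<Longrightarrow>
      finite (U \<inter> hball u t) \<and> real (card (U \<inter> hball u t)) \<le> C * exp (1/8 * t)"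
    using subexp_growth_card_hball_le[OF assms(1,3), of "1/8"] by auto
  define q :: real where "q = exp (2 * (1/8) - 1/2)"
  define B where "B = 6 * sqrt (cosh r) * (C * exp (2 * (1/8)) / (1 - q))"
  have "0 < q" "q < 1" "0 < B"
    unfolding B_def q_def using \<open>0 < C\<close> by auto
  then obtain k where "q ^ k < 1 / B"
    using real_arch_pow_inv[of "1 / B" q] by auto
  then have "B * q ^ k < 1"
    using \<open>0 < B\<close> by (simp add: pos_less_divide_eq mult.commute)
  then have "6 * sqrt (cosh r) * (C * exp (2 * (1/8)) * q ^ k / (1 - q)) < 1"
    unfolding B_def by (simp add: ac_simps)
  then show ?thesis
    unfolding q_def using chain_meets_ball_around_geodesic_point[OF assms(1) _ _ growth] \<open>0 < C\<close>
    by (intro exI[of _ "real k"] allI impI) auto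
qed

end
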